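(* Let $(S,\mathcal{S})$ be a measurable space, let ${\sf F}\subseteq\mathcal{P}(S)$, and let $\mathcal{E}$ be a $\cap$-stable collection with $\sigma(\mathcal{E})=\mathcal{S}$. If there exist $E_n\in\mathcal{E}\cap {\sf F}$, $n\in\mathbb{N}$, with $S=\bigcup_{n\in\mathbb{N}}E_{n}$, then $\{N^{\sf F}_{E}\mid E\in\mathcal{E}\}$ generates $\mathcal{C}^{\sf F}(\mathcal{S})$, i.e. $\sigma(N^{\sf F}_E\mid E\in\mathcal{E})=\mathcal{C}^{\sf F}(\mathcal{S})$.
   Context: $C(S)$ is the set of countable subsets of $S$. $C^{\sf F}(S)=\{M\in C(S)\mid |M\cap A|<\infty \text{ for all } A\in{\sf F}\}$. For $A\subseteq S$, $N^{\sf F}_A:C^{\sf F}(S)\to\mathbb{N}_0\cup\{\infty\}$, $M\mapsto|M\cap A|$. For nonempty $\mathcal{T}\subseteq\mathcal{P}(S)$, $\mathcal{C}^{\sf F}(\mathcal{T})=\sigma(N^{\sf F}_A\mid A\in\mathcal{T})$, a $\sigma$-field on $C^{\sf F}(S)$. *)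

theory Defs
  imports "HOL-Analysis.Analysis" "HOL-Library.Extended_Nat"
begin

definition countable_subsets :: "'a set \<Rightarrow> 'a set set" where
  "countable_subsets S = {M. M \<subseteq> S \<and> countable M}"

definition CF :: "'a set \<Rightarrow> 'a set set \<Rightarrow> 'a set set" where
  "CF S F = {M \<in> countable_subsets S. \<forall>A\<in>F. finite (M \<inter> A)}"

definition NF :: "'a set \<Rightarrow> 'a set \<Rightarrow> enat" where
  "NF A M = (if finite (M \<inter> A) then enat (card (M \<inter> A)) else \<infinity>)"

text \<open>\<C>^F(T) = \<sigma>(N^F_A | A \<in> T) on C^F(S), the codomain carrying the power-set \<sigma>-field.\<close>
definition CF_sigma :: "'a set \<Rightarrow> 'a set set \<Rightarrow> 'a set set \<Rightarrow> 'a set set set" where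
  "CF_sigma S F T = sigma_sets (CF S F)
     {NF A -` B \<inter> CF S F | A B. A \<in> T}"

end

theory Submission
  imports Defs
begin

text \<open>
  Then \<open>\<C>\<^sup>F(T') \<subseteq> \<C>\<^sup>F(T)\<close> holds as soon as every
  \<open>N\<^sup>F\<^sub>A\<close> with \<open>A \<in> T'\<close> is measurable for \<open>\<C>\<^sup>F(T)\<close>; the inclusion \<open>\<C>\<^sup>F(\<E>) \<subseteq> \<C>\<^sup>F(\<S>)\<close> is
  therefore immediate.  For the converse we view \<open>M \<mapsto> |M \<inter> A|\<close> as the ennreal-valued map
  \<open>count_in A\<close>, for which measurability is preserved under proper differences with
  finite values and under countable disjoint unions.  A Dynkin-system argument
  (\<open>\<E>\<close> is \<open>\<inter>\<close>-stable) shows that \<open>count_in (A \<inter> E)\<close> is measurable for all \<open>A \<in> \<sigma>(\<E>)\<close>,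
  whenever \<open>E \<in> \<E>\<close> has finite counts; here the finiteness of the counts on the \<open>E\<^sub>n \<in> F\<close>
  makes the subtraction legitimate.  Splitting an arbitrary \<open>A \<in> \<sigma>(\<E>)\<close> along the
  disjointed cover \<open>E\<^sub>n\<close> of \<open>S\<close> then gives measurability of \<open>count_in A\<close>, hence of \<open>N\<^sup>F\<^sub>A\<close>.
\<close>

definition count_in :: "'a set \<Rightarrow> 'a set \<Rightarrow> ennreal" where
  "count_in A M = emeasure (count_space UNIV) (M \<inter> A)"

lemma NF_eq_count_in: "ennreal_of_enat (NF A M) = count_in A M"
  by (simp add: NF_def count_in_def emeasure_count_space)

text \<open>Since \<open>ennreal_of_enat\<close> is injective, \<open>N\<^sup>F\<^sub>A\<close> and \<open>count_in A\<close> carry the same information.\<close>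
lemma NF_measurable_iff_count_in:
  "NF A \<in> measurable Ms (count_space UNIV) \<longleftrightarrow> count_in A \<in> borel_measurable Ms"
proof
  assume "NF A \<in> measurable Ms (count_space UNIV)"
  then have "(\<lambda>M. ennreal_of_enat (NF A M)) \<in> borel_measurable Ms" by measurable
  then show "count_in A \<in> borel_measurable Ms" by (simp add: NF_eq_count_in[abs_def])
next
  assume count: "count_in A \<in> borel_measurable Ms"
  show "NF A \<in> measurable Ms (count_space UNIV)"
    unfolding measurable_count_space_eq2_countable
  proof (intro conjI ballI)
    fix k :: enat
    have "NF A -` {k} \<inter> space Ms = count_in A -` {ennreal_of_enat k} \<inter> space Ms"
      by (auto simp: NF_eq_count_in[symmetric] ennreal_of_enat_inj)
    then show "NF A -` {k} \<inter> space Ms \<in> sets Ms"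
      using measurable_sets[OF count] by simp
  qed simp
qed

text \<open>Proper differences: subtraction of counts is valid where the larger count is finite.\<close>
lemma count_in_Diff_measurable:
  assumes "count_in B \<in> borel_measurable Ms" "count_in A \<in> borel_measurable Ms"
    and "A \<subseteq> B" and "\<And>M. M \<in> space Ms \<Longrightarrow> finite (M \<inter> B)"
  shows "count_in (B - A) \<in> borel_measurable Ms"
proof -
  have "count_in (B - A) M = count_in B M - count_in A M" if "M \<in> space Ms" for M
  proof -
    have fin: "finite (M \<inter> B)" using assms(4) that .
    have "emeasure (count_space UNIV) ((M \<inter> B) - (M \<inter> A)) =
          emeasure (count_space UNIV) (M \<inter> B) - emeasure (count_space UNIV) (M \<inter> A)"
      using \<open>A \<subseteq> B\<close>
      by (intro emeasure_Diff) (auto simp: emeasure_count_space fin intro: finite_subset[OF _ fin])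
    moreover have "M \<inter> (B - A) = (M \<inter> B) - (M \<inter> A)" by blast
    ultimately show ?thesis by (simp add: count_in_def)
  qed
  then have "count_in (B - A) \<in> borel_measurable Ms \<longleftrightarrow>
      (\<lambda>M. count_in B M - count_in A M) \<in> borel_measurable Ms"
    by (rule measurable_cong)
  also have "\<dots>" using assms(1,2) by measurable
  finally show ?thesis .
qed

text \<open>Countable disjoint unions: counts add up (\<open>\<sigma>\<close>-additivity of counting measure).\<close>
lemma count_in_disjoint_UN_measurable:
  fixes A :: "nat \<Rightarrow> 'a set"
  assumes "disjoint_family A" "\<And>i. count_in (A i) \<in> borel_measurable Ms"
  shows "count_in (\<Union>i. A i) \<in> borel_measurable Ms"
proof -
  have "count_in (\<Union>i. A i) M = (\<Sum>i. count_in (A i) M)" for M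
  proof -
    have "M \<inter> (\<Union>i. A i) = (\<Union>i. M \<inter> A i)" by blast
    moreover have "disjoint_family (\<lambda>i. M \<inter> A i)"
      using assms(1) unfolding disjoint_family_on_def by auto
    ultimately show ?thesis unfolding count_in_def by (simp add: suminf_emeasure)
  qed
  then have "count_in (\<Union>i. A i) \<in> borel_measurable Ms \<longleftrightarrow>
      (\<lambda>M. \<Sum>i. count_in (A i) M) \<in> borel_measurable Ms"
    by (intro measurable_cong)
  also have "\<dots>" using assms(2) by measurable
  finally show ?thesis .
qed

lemma count_in_Int_measurable:
  assumes "Int_stable \<E>" "\<E> \<subseteq> Pow S" "E \<in> \<E>"
    and fin: "\<And>M. M \<in> space Ms \<Longrightarrow> finite (M \<inter> E)"
    and gen: "\<And>X. X \<in> \<E> \<Longrightarrow> count_in X \<in> borel_measurable Ms"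
    and "A \<in> sigma_sets S \<E>"
  shows "count_in (A \<inter> E) \<in> borel_measurable Ms"
  using assms(1,2,6)
proof (induction rule: sigma_sets_induct_disjoint)
  case (basic A)
  then show ?case using \<open>Int_stable \<E>\<close> \<open>E \<in> \<E>\<close> gen by (auto simp: Int_stable_def)
next
  case empty
  show ?case by (simp add: count_in_def)
next
  case (compl A)
  have "(S - A) \<inter> E = E - A \<inter> E" using \<open>E \<in> \<E>\<close> \<open>\<E> \<subseteq> Pow S\<close> by blast
  then show ?case
    using count_in_Diff_measurable[OF gen[OF \<open>E \<in> \<E>\<close>] compl.IH _ fin] by simp
next
  case (union A)
  have "disjoint_family (\<lambda>i. A i \<inter> E)"
    using union.hyps(1) unfolding disjoint_family_on_def by auto
  then show ?case
    using count_in_disjoint_UN_measurable[of "\<lambda>i. A i \<inter> E"] union.IH by simp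
qed

lemma count_in_sigma_measurable:
  fixes En :: "nat \<Rightarrow> 'a set"
  assumes "Int_stable \<E>" "\<E> \<subseteq> Pow S"
    and cover: "\<And>n. En n \<in> \<E>" "S = (\<Union>n. En n)"
    and fin: "\<And>M n. M \<in> space Ms \<Longrightarrow> finite (M \<inter> En n)"
    and gen: "\<And>X. X \<in> \<E> \<Longrightarrow> count_in X \<in> borel_measurable Ms"
    and A: "A \<in> sigma_sets S \<E>"
  shows "count_in A \<in> borel_measurable Ms"
proof -
  interpret sigma_algebra S "sigma_sets S \<E>"
    using \<open>\<E> \<subseteq> Pow S\<close> by (rule sigma_algebra_sigma_sets)
  define D where "D = disjointed En"
  have D_sets: "D n \<in> sigma_sets S \<E>" for n
    using range_disjointed_sets[of En] cover(1) unfolding D_def by auto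
  have "A \<subseteq> S" using A by (rule sets_into_space)
  have D_cover: "(\<Union>n. D n) = S"
    using UN_disjointed_eq[of En] cover(2) unfolding D_def by simp
  have D_sub: "D n \<subseteq> En n" for n
    unfolding D_def by (rule disjointed_subset)
  have A_split: "(\<Union>n. (A \<inter> D n) \<inter> En n) = A"
  proof
    show "A \<subseteq> (\<Union>n. (A \<inter> D n) \<inter> En n)"
    proof
      fix x assume "x \<in> A"
      then obtain n where "x \<in> D n" using \<open>A \<subseteq> S\<close> D_cover by blast
      then show "x \<in> (\<Union>n. (A \<inter> D n) \<inter> En n)" using \<open>x \<in> A\<close> D_sub by blast
    qed
  qed blast
  have "disjoint_family (\<lambda>n. (A \<inter> D n) \<inter> En n)"
    using disjoint_family_disjointed[of En] unfolding D_def disjoint_family_on_def by blast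
  moreover have "count_in ((A \<inter> D n) \<inter> En n) \<in> borel_measurable Ms" for n
    by (intro count_in_Int_measurable[OF assms(1,2) cover(1) fin gen] Int A D_sets)
  ultimately show ?thesis
    using count_in_disjoint_UN_measurable[of "\<lambda>n. (A \<inter> D n) \<inter> En n"] A_split by simp
qed

definition CF_space :: "'a set \<Rightarrow> 'a set set \<Rightarrow> 'a set set \<Rightarrow> 'a set measure" where
  "CF_space S F T = sigma (CF S F) {NF A -` B \<inter> CF S F | A B. A \<in> T}"

lemma
  shows space_CF_space: "space (CF_space S F T) = CF S F"
    and sets_CF_space: "sets (CF_space S F T) = CF_sigma S F T"
proof -
  have "{NF A -` B \<inter> CF S F | A B. A \<in> T} \<subseteq> Pow (CF S F)" by blast
  then show "space (CF_space S F T) = CF S F" "sets (CF_space S F T) = CF_sigma S F T"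
    unfolding CF_space_def CF_sigma_def by (simp_all add: space_measure_of sets_measure_of)
qed

lemma NF_measurable_generator:
  assumes "A \<in> T"
  shows "NF A \<in> measurable (CF_space S F T) (count_space UNIV)"
proof (rule measurableI)
  fix B :: "enat set"
  have "NF A -` B \<inter> CF S F \<in> CF_sigma S F T"
    unfolding CF_sigma_def using assms by (blast intro: sigma_sets.Basic)
  then show "NF A -` B \<inter> space (CF_space S F T) \<in> sets (CF_space S F T)"
    by (simp add: space_CF_space sets_CF_space)
qed simp

lemma CF_sigma_subset:
  assumes "\<And>A. A \<in> T' \<Longrightarrow> NF A \<in> measurable (CF_space S F T) (count_space UNIV)"
  shows "CF_sigma S F T' \<subseteq> CF_sigma S F T"
  unfolding CF_sigma_def
proof (rule sigma_sets_mono, safe)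
  fix A and B :: "enat set"
  assume "A \<in> T'"
  from measurable_sets[OF assms[OF this], of B]
  show "NF A -` B \<inter> CF S F \<in> sigma_sets (CF S F) {NF A -` B \<inter> CF S F | A B. A \<in> T}"
    by (simp add: space_CF_space sets_CF_space CF_sigma_def)
qed

theorem theorem4p1:
  fixes S :: "'a set" and \<Sigma> F \<E> :: "'a set set"
  assumes "sigma_algebra S \<Sigma>"
    and "F \<subseteq> Pow S"
    and "\<E> \<subseteq> Pow S"
    and "Int_stable \<E>"
    and "sigma_sets S \<E> = \<Sigma>"
    and "\<exists>En :: nat \<Rightarrow> 'a set. (\<forall>n. En n \<in> \<E> \<inter> F) \<and> S = (\<Union>n. En n)"
  shows "CF_sigma S F \<E> = CF_sigma S F \<Sigma>"
proof
  obtain En :: "nat \<Rightarrow> 'a set" where "\<forall>n. En n \<in> \<E> \<inter> F"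
    and cover: "S = (\<Union>n. En n)"
    using assms(6) by (elim exE conjE)
  then have En: "\<And>n. En n \<in> \<E>" "\<And>n. En n \<in> F" by auto
  let ?Ms = "CF_space S F \<E>"
  have fin: "finite (M \<inter> En n)" if "M \<in> space ?Ms" for M n
    using that En(2) unfolding space_CF_space CF_def by blast
  have gen: "count_in X \<in> borel_measurable ?Ms" if "X \<in> \<E>" for X
    using NF_measurable_generator[OF that] by (simp add: NF_measurable_iff_count_in)
  have "NF A \<in> measurable ?Ms (count_space UNIV)" if "A \<in> \<Sigma>" for A
    using count_in_sigma_measurable[OF assms(4,3) En(1) cover fin gen] that assms(5)
    by (simp add: NF_measurable_iff_count_in)
  then show "CF_sigma S F \<Sigma> \<subseteq> CF_sigma S F \<E>" by (rule CF_sigma_subset)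
next
  have "\<E> \<subseteq> \<Sigma>" using assms(5) sigma_sets.Basic by blast
  then show "CF_sigma S F \<E> \<subseteq> CF_sigma S F \<Sigma>"
    using NF_measurable_generator CF_sigma_subset by (metis subsetD)
qed

end
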